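(* In the nonrepetitive game over any symbol set, suppose that whenever it is Ann's turn and the current sequence is $s_1,\ldots,s_{m-1}$ (so $m$ is odd), Ann chooses a symbol $s_m$ not excluded by the following rules: (i) $s_{m-2}$ is excluded; (ii) if $s_{m-1}=s_{m-4}$, then $s_{m-3}$ is excluded; (iii) if only one symbol has been excluded by rules (i) and (ii), then $s_{m-4}$ is also excluded (rules referring to nonexistent terms are ignored). Then, regardless of Ben's moves, the sequence built never contains a repetition of size $2$, $3$ or $4$.
   Context: A repetition of size $h\geq1$ in a sequence is a block of consecutive terms of the form $x_1\ldots x_h x_1\ldots x_h$. In the nonrepetitive game Ann and Ben alternately (Ann first) append symbols from a symbol set to a sequence, nothing ever being erased; thus Ann chooses the terms with odd indices $s_1,s_3,\ldots$ and Ben those with even indices. *)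

theory Defs
  imports Main
begin

text \<open>Sequences are lists; the paper's term s_j (1-based) is xs ! (j - 1).
  A repetition of size h is a block x_1..x_h x_1..x_h of consecutive terms.\<close>

definition has_repetition :: "nat \<Rightarrow> 'a list \<Rightarrow> bool" where
  "has_repetition h xs \<longleftrightarrow> h \<ge> 1 \<and>
     (\<exists>i. i + 2 * h \<le> length xs \<and> take h (drop i xs) = take h (drop (i + h) xs))"

text \<open>Symbols excluded for Ann when the current sequence is xs = s_1 .. s_{m-1}
  (n = m - 1 = length xs, so s_{m-k} = xs ! (n - k), existing iff n \<ge> k).\<close>

definition rules_i_ii :: "'a list \<Rightarrow> 'a set" where
  "rules_i_ii xs = (let n = length xs in
      (if n \<ge> 2 then {xs ! (n - 2)} else {}) \<union>
      (if n \<ge> 4 \<and> xs ! (n - 1) = xs ! (n - 4) then {xs ! (n - 3)} else {}))"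

definition ann_excluded :: "'a list \<Rightarrow> 'a set" where
  "ann_excluded xs = rules_i_ii xs \<union>
      (if card (rules_i_ii xs) = 1 \<and> length xs \<ge> 4 then {xs ! (length xs - 4)} else {})"

text \<open>Ann moves at odd 1-based positions m, i.e. 0-based even positions k = m - 1.
  Ben's moves (even 1-based positions) are unconstrained.\<close>

definition ann_follows_strategy :: "'a list \<Rightarrow> bool" where
  "ann_follows_strategy xs \<longleftrightarrow>
     (\<forall>k < length xs. even k \<longrightarrow> xs ! k \<notin> ann_excluded (take k xs))"

end

theory Submission
  imports Defs
begin

(* A repetition of size h starting at position i gives s!p = s!(p+h)
   for i <= p < i+h.  Among any two consecutive positions one is Ann's (even
   0-based index k), and Ann's choice s!k avoids the excluded symbols.
   - size 2: an Ann position k late in the block has s!k = s!(k-2), which rule (i) forbids;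
   - size 3: an Ann position k has s!(k-1) = s!(k-4) and s!k = s!(k-3), forbidden by rule (ii);
   - size 4: an Ann position k has s!k = s!(k-4); by rule (iii) this forces
     s!(k-1) = s!(k-4) and s!(k-3) <> s!(k-2).  The same applied to the Ann position
     k-2 gives s!(k-3) = s!(k-6), and periodicity gives s!(k-6) = s!(k-2): contradiction. *)

lemma excluded_by_rule_i:
  assumes "2 \<le> length xs"
  shows "xs ! (length xs - 2) \<in> ann_excluded xs"
  using assms by (simp add: ann_excluded_def rules_i_ii_def Let_def)

lemma excluded_by_rule_ii:
  assumes "4 \<le> length xs" "xs ! (length xs - 1) = xs ! (length xs - 4)"
  shows "xs ! (length xs - 3) \<in> ann_excluded xs"
  using assms by (simp add: ann_excluded_def rules_i_ii_def Let_def)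

text \<open>Rule (iii): the symbol four places back is excluded unless rules (i) and (ii)
  already exclude two different symbols.\<close>
lemma excluded_by_rule_iii:
  assumes "4 \<le> length xs"
    and "\<not> (xs ! (length xs - 1) = xs ! (length xs - 4) \<and>
           xs ! (length xs - 3) \<noteq> xs ! (length xs - 2))"
  shows "xs ! (length xs - 4) \<in> ann_excluded xs"
proof -
  have "rules_i_ii xs = {xs ! (length xs - 2)}"
    using assms by (auto simp: rules_i_ii_def Let_def)
  then show ?thesis
    using assms(1) by (simp add: ann_excluded_def)
qed

lemma ann_position_constraints:
  assumes strategy: "ann_follows_strategy s" and k: "k < length s" "even k"
  shows rule_i: "2 \<le> k \<Longrightarrow> s ! k \<noteq> s ! (k - 2)"
    and rule_ii: "4 \<le> k \<Longrightarrow> s ! (k - 1) = s ! (k - 4) \<Longrightarrow> s ! k \<noteq> s ! (k - 3)"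
    and rule_iii: "4 \<le> k \<Longrightarrow> s ! k = s ! (k - 4) \<Longrightarrow>
                   s ! (k - 1) = s ! (k - 4) \<and> s ! (k - 3) \<noteq> s ! (k - 2)"
proof -
  let ?xs = "take k s"
  have move: "s ! k \<notin> ann_excluded ?xs"
    using strategy k unfolding ann_follows_strategy_def by blast
  have len: "length ?xs = k" using k(1) by simp
  have earlier_term: "?xs ! (k - j) = s ! (k - j)" if "1 \<le> j" "j \<le> k" for j
    using that by simp
  show "2 \<le> k \<Longrightarrow> s ! k \<noteq> s ! (k - 2)"
    using move excluded_by_rule_i[of ?xs] len earlier_term[of 2] by auto
  show "4 \<le> k \<Longrightarrow> s ! (k - 1) = s ! (k - 4) \<Longrightarrow> s ! k \<noteq> s ! (k - 3)"
    using move excluded_by_rule_ii[of ?xs] len earlier_term[of 1] earlier_term[of 3]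
      earlier_term[of 4]
    by auto
  show "4 \<le> k \<Longrightarrow> s ! k = s ! (k - 4) \<Longrightarrow>
        s ! (k - 1) = s ! (k - 4) \<and> s ! (k - 3) \<noteq> s ! (k - 2)"
  proof -
    assume "4 \<le> k" "s ! k = s ! (k - 4)"
    then have "?xs ! (length ?xs - 4) \<notin> ann_excluded ?xs"
      using move len earlier_term[of 4] by simp
    then have "?xs ! (length ?xs - 1) = ?xs ! (length ?xs - 4) \<and>
               ?xs ! (length ?xs - 3) \<noteq> ?xs ! (length ?xs - 2)"
      using excluded_by_rule_iii[of ?xs] len \<open>4 \<le> k\<close> by metis
    then show ?thesis
      using \<open>4 \<le> k\<close> len earlier_term[of 1] earlier_term[of 2] earlier_term[of 3]
        earlier_term[of 4]
      by simp
  qed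
qed

lemma repetition_periodic:
  assumes "has_repetition h s"
  obtains i where "i + 2 * h \<le> length s"
    and "\<And>p. i \<le> p \<Longrightarrow> p < i + h \<Longrightarrow> s ! p = s ! (p + h)"
proof -
  obtain i where i: "i + 2 * h \<le> length s" "take h (drop i s) = take h (drop (i + h) s)"
    using assms unfolding has_repetition_def by blast
  have "s ! p = s ! (p + h)" if "i \<le> p" "p < i + h" for p
  proof -
    have "take h (drop i s) ! (p - i) = take h (drop (i + h) s) ! (p - i)"
      using i(2) by simp
    then show ?thesis using that i(1) by (simp add: add.commute)
  qed
  with i(1) that show ?thesis by blast
qed

lemma ann_position_among_two:
  obtains k :: nat where "even k" "k = j \<or> k = j + 1"
  using that[of j] that[of "j + 1"] by auto

lemma no_repetition_2:
  assumes "ann_follows_strategy s"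
  shows "\<not> has_repetition 2 s"
proof
  assume "has_repetition 2 s"
  then obtain i where i: "i + 4 \<le> length s"
    and period: "\<And>p. i \<le> p \<Longrightarrow> p < i + 2 \<Longrightarrow> s ! p = s ! (p + 2)"
    by (rule repetition_periodic) auto
  obtain k where k: "even k" "k = i + 2 \<or> k = i + 2 + 1"
    by (rule ann_position_among_two)
  have "s ! (k - 2) = s ! k" using period[of "k - 2"] k by auto
  then show False using rule_i[OF assms, of k] k i by auto
qed

lemma no_repetition_3:
  assumes "ann_follows_strategy s"
  shows "\<not> has_repetition 3 s"
proof
  assume "has_repetition 3 s"
  then obtain i where i: "i + 6 \<le> length s"
    and period: "\<And>p. i \<le> p \<Longrightarrow> p < i + 3 \<Longrightarrow> s ! p = s ! (p + 3)"
    by (rule repetition_periodic) auto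
  obtain k where k: "even k" "k = i + 4 \<or> k = i + 4 + 1"
    by (rule ann_position_among_two)
  have "s ! (k - 4) = s ! (k - 1)" using period[of "k - 4"] k by auto
  moreover have "s ! (k - 3) = s ! k" using period[of "k - 3"] k by auto
  ultimately show False using rule_ii[OF assms, of k] k i by auto
qed

lemma no_repetition_4:
  assumes "ann_follows_strategy s"
  shows "\<not> has_repetition 4 s"
proof
  assume "has_repetition 4 s"
  then obtain i where i: "i + 8 \<le> length s"
    and period: "\<And>p. i \<le> p \<Longrightarrow> p < i + 4 \<Longrightarrow> s ! p = s ! (p + 4)"
    by (rule repetition_periodic) auto
  obtain k where k: "even k" "k = i + 6 \<or> k = i + 6 + 1"
    by (rule ann_position_among_two)
  have at_k: "s ! (k - 4) = s ! k" using period[of "k - 4"] k by auto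
  have at_k2: "s ! (k - 6) = s ! (k - 2)" using period[of "k - 6"] k by auto
  have "s ! (k - 3) \<noteq> s ! (k - 2)"
    using rule_iii[OF assms, of k] k i at_k by auto
  moreover have "s ! (k - 2 - 1) = s ! (k - 2 - 4)"
    using rule_iii[OF assms, of "k - 2"] k i at_k2 by auto
  then have "s ! (k - 3) = s ! (k - 6)"
    by (simp add: numeral_eq_Suc)
  ultimately show False using at_k2 by simp
qed

theorem mainTheorem6:
  fixes s :: "'a list"
  assumes "ann_follows_strategy s"
  shows "\<not> has_repetition 2 s \<and> \<not> has_repetition 3 s \<and> \<not> has_repetition 4 s"
  using no_repetition_2[OF assms] no_repetition_3[OF assms] no_repetition_4[OF assms]
  by blast

end
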